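(* Let $A=\{a_{ij}\}$ be a real $N\times N$ matrix satisfying condition (M), and let $D=\mathrm{diag}(d_{11},\dots,d_{NN})$ with $d_{ii}>0$ for all $i$ and $\sum_{i=1}^N d_{ii}a_{ij}\ge0$ for every $j$. Then for every $\sigma\in[0,1]$ and every $\Delta t>0$ the matrix $E+\Delta t\,\sigma A$ is invertible and $$\frac{\|D\|_1}{\max_j s_j}\le \left\|\left[E+\Delta t\,\sigma A\right]^{-1}\right\|_1\le \frac{\|D\|_1}{\min_j s_j},\qquad s_j:=d_{jj}+\Delta t\,\sigma\sum_{i=1}^N d_{ii}a_{ij}.$$
   Context: $E$ is the $N\times N$ identity. Condition (M) on a real $N\times N$ matrix $A=\{a_{ij}\}$: $a_{ii}\ge 0$ for all $i$ and $a_{ij}\le 0$ for all $i\ne j$. For vectors $\|y\|_1=\sum_i|y_i|$ and for matrices $\|A\|_1=\max_j\sum_i|a_{ij}|$ (so $\|D\|_1=\max_i d_{ii}$). *)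

theory Defs
  imports "HOL-Analysis.Analysis"
begin

text \<open>Matrices are \<open>real^'n^'n\<close>; entry \<open>A $ i $ j\<close> is row i, column j.\<close>

definition cond_M :: "real^'n^'n \<Rightarrow> bool" where
  "cond_M A \<longleftrightarrow> (\<forall>i. A $ i $ i \<ge> 0) \<and> (\<forall>i j. i \<noteq> j \<longrightarrow> A $ i $ j \<le> 0)"

definition mat_norm1 :: "real^'n^'n \<Rightarrow> real" where
  "mat_norm1 A = Max (range (\<lambda>j. \<Sum>i\<in>UNIV. \<bar>A $ i $ j\<bar>))"

definition diag_mat :: "real^'n \<Rightarrow> real^'n^'n" where
  "diag_mat d = (\<chi> i j. if i = j then d $ i else 0)"

end

theory Submission
  imports Defs
begin

text \<open>Write \<open>B = E + \<Delta>t \<sigma> A\<close>. Its off-diagonal entries are nonpositive and its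
  \<open>d\<close>-weighted column sums are the numbers \<open>s\<^sub>j \<ge> d\<^sub>j > 0\<close>, i.e. \<open>d B = s\<close>. For such a matrix a
  minimum principle holds: if \<open>y B \<ge> 0\<close> then \<open>y \<ge> 0\<close>, by looking at the index where
  \<open>y\<^sub>k / d\<^sub>k\<close> is smallest. Applied to \<open>\<plusminus>y\<close> it gives invertibility of \<open>B\<close>, applied to the rows
  of \<open>B\<^sup>-\<^sup>1\<close> it gives \<open>B\<^sup>-\<^sup>1 \<ge> 0\<close>. Then \<open>d = s B\<^sup>-\<^sup>1\<close> traps every column sum of \<open>B\<^sup>-\<^sup>1\<close>,
  which is its 1-norm, between \<open>d\<^sub>k / max s\<close> and \<open>d\<^sub>k / min s\<close>.\<close>

definition Z_matrix :: "real^'n^'n \<Rightarrow> bool" where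
  "Z_matrix B \<longleftrightarrow> (\<forall>i j. i \<noteq> j \<longrightarrow> B $ i $ j \<le> 0)"

lemma matrix_inv_left_right:
  fixes A :: "'a::field^'n^'n"
  assumes "invertible A"
  shows "matrix_inv A ** A = mat 1" and "A ** matrix_inv A = mat 1"
proof -
  have "A ** matrix_inv A = mat 1 \<and> matrix_inv A ** A = mat 1"
    using assms unfolding matrix_inv_def invertible_def by (rule someI_ex)
  then show "matrix_inv A ** A = mat 1" and "A ** matrix_inv A = mat 1" by simp_all
qed

context
  fixes B :: "real^'n^'n" and d :: "real^'n"
  assumes Z: "Z_matrix B"
    and d_pos: "\<forall>i. 0 < d $ i"
    and weighted_col_sums_pos: "\<forall>j. 0 < (d v* B) $ j"
begin

lemma nonneg_if_vector_matrix_mult_nonneg: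
  assumes "\<forall>j. 0 \<le> (y v* B) $ j"
  shows "0 \<le> y $ k"
proof (rule ccontr)
  assume "\<not> 0 \<le> y $ k"
  define w where "w = Min (range (\<lambda>k. y $ k / d $ k))"
  have "w \<in> range (\<lambda>k. y $ k / d $ k)"
    unfolding w_def by (rule Min_in) auto
  then obtain i where "w = y $ i / d $ i" by auto
  then have yi: "y $ i = w * d $ i" using d_pos by (simp add: less_imp_neq[symmetric])
  have "w \<le> y $ j / d $ j" for j unfolding w_def by simp
  then have y_ge: "w * d $ j \<le> y $ j" for j using d_pos by (simp add: le_divide_eq)
  have "w < 0"
    using \<open>\<not> 0 \<le> y $ k\<close> y_ge[of k] d_pos
    by (smt (verit) mult_nonneg_nonneg)
  have "(y v* B) $ i = (\<Sum>k\<in>UNIV. y $ k * B $ k $ i)"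
    by (simp add: vector_matrix_mult_def)
  also have "\<dots> \<le> (\<Sum>k\<in>UNIV. w * d $ k * B $ k $ i)"
  proof (rule sum_mono)
    fix k
    show "y $ k * B $ k $ i \<le> w * d $ k * B $ k $ i"
    proof (cases "k = i")
      case False
      then have "B $ k $ i \<le> 0" using Z by (simp add: Z_matrix_def)
      then show ?thesis using y_ge[of k] by (simp add: mult_right_mono_neg)
    qed (simp add: yi)
  qed
  also have "\<dots> = w * (d v* B) $ i"
    by (simp add: vector_matrix_mult_def sum_distrib_left mult.assoc)
  also have "\<dots> < 0"
    using \<open>w < 0\<close> weighted_col_sums_pos by (simp add: mult_neg_pos)
  finally show False using assms by (meson not_le)
qed

lemma invertible_Z_matrix:
  "invertible B"
proof -
  have "x = 0" if "transpose B *v x = 0" for x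
  proof -
    have xB: "x v* B = 0" and neg_xB: "(- x) v* B = 0"
      using that by (simp_all add: vector_matrix_mult_def vec_eq_iff sum_negf)
    have "0 \<le> x $ i" for i
      by (rule nonneg_if_vector_matrix_mult_nonneg) (simp add: xB)
    moreover have "0 \<le> (- x) $ i" for i
      by (rule nonneg_if_vector_matrix_mult_nonneg) (simp add: neg_xB)
    ultimately show "x = 0" by (simp add: vec_eq_iff order_antisym)
  qed
  then show ?thesis
    unfolding invertible_right_inverse left_invertible_transpose[symmetric]
      matrix_left_invertible_ker by blast
qed

lemma matrix_inv_Z_matrix_nonneg:
  "0 \<le> matrix_inv B $ i $ k"
proof (rule nonneg_if_vector_matrix_mult_nonneg)
  have "(matrix_inv B $ i v* B) $ j = (matrix_inv B ** B) $ i $ j" for j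
    by (simp add: vector_matrix_mult_def matrix_matrix_mult_def mult.commute)
  then show "\<forall>j. 0 \<le> (matrix_inv B $ i v* B) $ j"
    using matrix_inv_left_right(1)[OF invertible_Z_matrix] by (simp add: mat_def)
qed

end

lemma mat_norm1_nonneg_entries:
  assumes "\<forall>i j. 0 \<le> X $ i $ j"
  shows "mat_norm1 X = Max (range (\<lambda>j. \<Sum>i\<in>UNIV. X $ i $ j))"
  using assms by (simp add: mat_norm1_def)

lemma mat_norm1_diag_mat:
  assumes "\<forall>i. 0 \<le> d $ i"
  shows "mat_norm1 (diag_mat d) = Max (range (\<lambda>j. d $ j))"
proof -
  have "(\<Sum>i\<in>UNIV. \<bar>diag_mat d $ i $ j\<bar>) = d $ j" for j
  proof -
    have "(\<Sum>i\<in>UNIV. \<bar>diag_mat d $ i $ j\<bar>) = (\<Sum>i\<in>UNIV. if i = j then \<bar>d $ j\<bar> else 0)"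
      by (rule sum.cong) (auto simp: diag_mat_def)
    then show ?thesis using assms by simp
  qed
  then show ?thesis unfolding mat_norm1_def by simp
qed

lemma mat_norm1_bounds_of_vector_matrix_mult:
  assumes X_nonneg: "\<forall>i j. 0 \<le> X $ i $ j"
    and s_pos: "\<forall>j. 0 < s $ j"
    and sX: "s v* X = d"
  shows "Max (range (\<lambda>j. d $ j)) / Max (range (\<lambda>j. s $ j)) \<le> mat_norm1 X"
    and "mat_norm1 X \<le> Max (range (\<lambda>j. d $ j)) / Min (range (\<lambda>j. s $ j))"
proof -
  define cs where "cs k = (\<Sum>i\<in>UNIV. X $ i $ k)" for k
  define Ms where "Ms = Max (range (\<lambda>j. s $ j))"
  define ms where "ms = Min (range (\<lambda>j. s $ j))"
  define Md where "Md = Max (range (\<lambda>j. d $ j))"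
  have norm_X: "mat_norm1 X = Max (range cs)"
    unfolding cs_def using mat_norm1_nonneg_entries[OF X_nonneg] .
  have d_eq: "d $ k = (\<Sum>j\<in>UNIV. s $ j * X $ j $ k)" for k
    using sX by (auto simp: vec_eq_iff vector_matrix_mult_def)
  have "ms \<in> range (\<lambda>j. s $ j)" unfolding ms_def by (rule Min_in) auto
  then have ms_pos: "0 < ms" using s_pos by auto
  have "s $ k \<le> Ms" for k unfolding Ms_def by simp
  then have Ms_pos: "0 < Ms" using s_pos by (meson less_le_trans)
  have d_le: "d $ k \<le> Ms * cs k" for k
    unfolding d_eq cs_def sum_distrib_left
    by (rule sum_mono) (simp add: Ms_def X_nonneg mult_right_mono)
  have d_ge: "ms * cs k \<le> d $ k" for k
    unfolding d_eq cs_def sum_distrib_left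
    by (rule sum_mono) (simp add: ms_def X_nonneg mult_right_mono)
  have "Md \<in> range (\<lambda>j. d $ j)" unfolding Md_def by (rule Max_in) auto
  then obtain k0 where "Md = d $ k0" by auto
  then have "Md / Ms \<le> cs k0"
    using d_le[of k0] Ms_pos by (simp add: divide_le_eq mult.commute)
  also have "\<dots> \<le> Max (range cs)" by simp
  finally show "Md / Ms \<le> mat_norm1 X" by (simp add: norm_X)
  have "cs k \<le> Md / ms" for k
    using d_ge[of k] ms_pos by (simp add: le_divide_eq mult.commute Md_def order_trans)
  then show "mat_norm1 X \<le> Md / ms" by (simp add: norm_X)
qed

theorem theorem2:
  fixes A :: "real^'n^'n" and d :: "real^'n" and \<sigma> \<Delta>t :: real
  assumes "cond_M A"
    and "\<forall>i. d $ i > 0"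
    and "\<forall>j. (\<Sum>i\<in>UNIV. d $ i * A $ i $ j) \<ge> 0"
    and "0 \<le> \<sigma>" and "\<sigma> \<le> 1" and "\<Delta>t > 0"
  defines "s \<equiv> (\<lambda>j. d $ j + \<Delta>t * \<sigma> * (\<Sum>i\<in>UNIV. d $ i * A $ i $ j))"
  shows "invertible (mat 1 + (\<Delta>t * \<sigma>) *\<^sub>R A)
    \<and> mat_norm1 (diag_mat d) / Max (range s) \<le> mat_norm1 (matrix_inv (mat 1 + (\<Delta>t * \<sigma>) *\<^sub>R A))
    \<and> mat_norm1 (matrix_inv (mat 1 + (\<Delta>t * \<sigma>) *\<^sub>R A)) \<le> mat_norm1 (diag_mat d) / Min (range s)"
proof -
  define B where "B = mat 1 + (\<Delta>t * \<sigma>) *\<^sub>R A"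
  have "0 \<le> \<Delta>t * \<sigma>" using assms(4,6) by simp
  then have Z: "Z_matrix B"
    using assms(1) by (simp add: Z_matrix_def cond_M_def B_def mat_def mult_nonneg_nonpos)
  have "(d v* B) $ j = (\<Sum>i\<in>UNIV. d $ i * (if i = j then 1 else 0))
      + \<Delta>t * \<sigma> * (\<Sum>i\<in>UNIV. d $ i * A $ i $ j)" for j
    by (simp add: B_def vector_matrix_mult_def mat_def distrib_left sum.distrib
        sum_distrib_left mult.left_commute)
  then have dB: "d v* B = (\<chi> j. s j)"
    by (simp add: s_def vec_eq_iff if_distrib cong: if_cong)
  have s_pos: "\<forall>j. 0 < s j"
    using assms(2,3) \<open>0 \<le> \<Delta>t * \<sigma>\<close> by (simp add: s_def add_pos_nonneg)
  then have "\<forall>j. 0 < (d v* B) $ j" by (simp add: dB)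
  note B_facts = invertible_Z_matrix[OF Z assms(2) this]
    matrix_inv_Z_matrix_nonneg[OF Z assms(2) this]
  have "(\<chi> j. s j) v* matrix_inv B = d"
    using matrix_inv_left_right(2)[OF B_facts(1)]
    by (metis dB vector_matrix_mul_assoc vector_matrix_mul_rid)
  from mat_norm1_bounds_of_vector_matrix_mult[OF _ _ this] B_facts s_pos assms(2)
  show ?thesis
    by (simp add: B_def mat_norm1_diag_mat less_imp_le)
qed

end
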